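(* Let $1\le p<2$. There is a constant $C>0$ depending only on $p$ such that for all $n$ and all $a=(a_i)_{i=1}^n$, $b=(b_i)_{i=1}^n$ real sequences, writing $ab=(a_1b_1,\dots,a_nb_n)$, $$s_p(ab)\le C\,s_p(a)\big(\|b\|_\infty+v_p(b)\big).$$
   Context: For a finite real sequence $x=(x_1,\dots,x_n)$, $s_p(x)=\big(\sup_{k\le n}\sup_{0=i_0<\dots<i_k=n}\sum_{j=0}^{k-1}\big|\sum_{\ell=i_j+1}^{i_{j+1}}x_\ell\big|^p\big)^{1/p}$ and $v_p(x)=\big(\sup_{k\le n}\sup_{0=i_0<\dots<i_k=n}\sum_{j=0}^{k-1}|x_{i_{j+1}}-x_{i_j+1}|^p\big)^{1/p}$; $\|b\|_\infty=\max_i|b_i|$. *)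

theory Defs
  imports Complex_Main
begin

text \<open>A finite real sequence x = (x_1,...,x_n) is represented by a function
  x :: nat => real together with its length n; only x 1, ..., x n matter.\<close>

definition is_partition :: "nat \<Rightarrow> nat \<Rightarrow> (nat \<Rightarrow> nat) \<Rightarrow> bool" where
  "is_partition n k i \<longleftrightarrow> k \<le> n \<and> i 0 = 0 \<and> i k = n \<and> (\<forall>j<k. i j < i (Suc j))"

definition s_var :: "real \<Rightarrow> nat \<Rightarrow> (nat \<Rightarrow> real) \<Rightarrow> real" where
  "s_var p n x = (Sup {(\<Sum>j<k. \<bar>\<Sum>l\<in>{i j<..i (Suc j)}. x l\<bar> powr p) | k i. is_partition n k i})
                  powr (1 / p)"

definition v_var :: "real \<Rightarrow> nat \<Rightarrow> (nat \<Rightarrow> real) \<Rightarrow> real" where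
  "v_var p n x = (Sup {(\<Sum>j<k. \<bar>x (i (Suc j)) - x (i j + 1)\<bar> powr p) | k i. is_partition n k i})
                  powr (1 / p)"

definition sup_norm :: "nat \<Rightarrow> (nat \<Rightarrow> real) \<Rightarrow> real" where
  "sup_norm n b = Max (insert 0 {\<bar>b i\<bar> | i. 1 \<le> i \<and> i \<le> n})"

end

theory Submission
  imports Defs "HOL-Analysis.Convex" "HOL-Analysis.Summation_Tests"
begin

text \<open>
  Let Fa t and Fb t be the p-th powers of the s_p-variation of a and the v_p-variation of b over
  the first t terms. They are superadditive along partitions, so a block (x, y] satisfies
  |a_(x+1) + ... + a_y|^p \<le> Fa y - Fa x and |b_y - b_(x+1)|^p \<le> Fb y - Fb x.

  On a block (s, t] write  sum a_l b_l = b_(s+1) sum a_l + sum a_l (b_l - b_(s+1)).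
  The last sum is a discrete Stieltjes sum over the finest partition of (s, t], which Young's
  argument coarsens by deleting one partition point at a time until a single interval, on which
  the sum vanishes, is left. Deleting a point changes the sum by a block sum of a times an
  increment of b; with m intervals left, the Cauchy-Schwarz inequality yields a point whose
  deletion costs at most (2 (Fa t - Fa s) (Fb t - Fb s))^(1/p) (m - 1)^(-2/p). Since p < 2
  these costs are summable, hence  |sum a_l b_l| \<le> C (||b||_inf + v_p(b)) (Fa t - Fa s)^(1/p),
  and raising to the p-th power and adding over the blocks of any partition gives the theorem.
\<close>

lemma ascending_upto_le:
  fixes i :: "nat \<Rightarrow> 'a::order"
  assumes "\<forall>j<k. i j < i (Suc j)" "j \<le> j'" "j' \<le> k"
  shows "i j \<le> i j'"
  by (rule lift_Suc_mono_le_ivl[of "{..<k}"]) (use assms in \<open>auto intro: less_imp_le\<close>)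

definition partition_sums :: "(nat \<Rightarrow> nat \<Rightarrow> real) \<Rightarrow> nat \<Rightarrow> real set" where
  "partition_sums f t = {(\<Sum>j<k. f (i j) (i (Suc j))) | k i. is_partition t k i}"

definition partition_Sup :: "(nat \<Rightarrow> nat \<Rightarrow> real) \<Rightarrow> nat \<Rightarrow> real" where
  "partition_Sup f t = Sup (partition_sums f t)"

lemma s_var_eq_partition_Sup:
  "s_var p n x = partition_Sup (\<lambda>u v. \<bar>\<Sum>l\<in>{u<..v}. x l\<bar> powr p) n powr (1 / p)"
  unfolding s_var_def partition_Sup_def partition_sums_def ..

lemma v_var_eq_partition_Sup:
  "v_var p n x = partition_Sup (\<lambda>u v. \<bar>x v - x (u + 1)\<bar> powr p) n powr (1 / p)"
  unfolding v_var_def partition_Sup_def partition_sums_def ..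

lemma partition_sums_nonempty: "partition_sums f t \<noteq> {}"
proof -
  have "is_partition t (min 1 t) (\<lambda>j. if j = 0 then 0 else t)"
    by (auto simp: is_partition_def)
  then show ?thesis
    unfolding partition_sums_def by blast
qed

lemma partition_sums_bdd_above: "bdd_above (partition_sums f t)"
proof (rule bdd_aboveI)
  define B where "B = Max ((\<lambda>(x, y). \<bar>f x y\<bar>) ` ({..t} \<times> {..t}))"
  have f_le_B: "f x y \<le> B" if "x \<le> t" "y \<le> t" for x y
    unfolding B_def by (rule order.trans[OF abs_ge_self], rule Max_ge) (use that in auto)
  fix \<sigma> assume "\<sigma> \<in> partition_sums f t"
  then obtain k i where \<sigma>: "\<sigma> = (\<Sum>j<k. f (i j) (i (Suc j)))" and P: "is_partition t k i"
    unfolding partition_sums_def by blast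
  have "\<sigma> \<le> (\<Sum>j<k. max 0 B)"
    unfolding \<sigma>
  proof (rule sum_mono)
    fix j assume "j \<in> {..<k}"
    then have "i j \<le> t" "i (Suc j) \<le> t"
      using P ascending_upto_le[of k i j k] ascending_upto_le[of k i "Suc j" k]
      by (auto simp: is_partition_def)
    then show "f (i j) (i (Suc j)) \<le> max 0 B"
      using f_le_B by fastforce
  qed
  also have "\<dots> \<le> real t * max 0 B"
    using P by (simp add: is_partition_def mult_right_mono)
  finally show "\<sigma> \<le> real t * max 0 B" .
qed

lemma partition_Sup_zero: "partition_Sup f 0 = 0"
proof -
  have "partition_sums f 0 = {0}"
    unfolding partition_sums_def is_partition_def
    by (auto intro!: exI[of _ "\<lambda>_. 0"])
  then show ?thesis
    by (simp add: partition_Sup_def)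
qed

lemma block_le_partition_Sup_diff:
  assumes "u < t"
  shows "f u t \<le> partition_Sup f t - partition_Sup f u"
proof -
  have "\<sigma> + f u t \<in> partition_sums f t" if \<sigma>_in: "\<sigma> \<in> partition_sums f u" for \<sigma>
  proof -
    obtain k i where \<sigma>: "\<sigma> = (\<Sum>j<k. f (i j) (i (Suc j)))" and P: "is_partition u k i"
      using \<sigma>_in unfolding partition_sums_def by blast
    have "is_partition t (Suc k) (i(Suc k := t))"
      using P assms by (auto simp: is_partition_def less_Suc_eq)
    moreover have "\<sigma> + f u t = (\<Sum>j<Suc k. f ((i(Suc k := t)) j) ((i(Suc k := t)) (Suc j)))"
      using P unfolding \<sigma> is_partition_def by (auto intro!: sum.cong)
    ultimately show ?thesis
      unfolding partition_sums_def by blast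
  qed
  then have "partition_Sup f u \<le> partition_Sup f t - f u t"
    unfolding partition_Sup_def
    by (intro cSup_least partition_sums_nonempty)
       (simp add: cSup_upper partition_sums_bdd_above le_diff_eq)
  then show ?thesis
    by simp
qed

lemma partition_Sup_nonneg:
  assumes "\<And>x y. 0 \<le> f x y"
  shows "0 \<le> partition_Sup f t"
proof -
  obtain \<sigma> where \<sigma>: "\<sigma> \<in> partition_sums f t"
    using partition_sums_nonempty by blast
  then have "0 \<le> \<sigma>"
    using assms by (auto simp: partition_sums_def intro: sum_nonneg)
  also have "\<sigma> \<le> partition_Sup f t"
    unfolding partition_Sup_def using \<sigma> partition_sums_bdd_above by (rule cSup_upper)
  finally show ?thesis .
qed

lemma partition_Sup_le:
  assumes "\<And>k i. is_partition t k i \<Longrightarrow> (\<Sum>j<k. f (i j) (i (Suc j))) \<le> B"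
  shows "partition_Sup f t \<le> B"
  unfolding partition_Sup_def
  using assms by (intro cSup_least partition_sums_nonempty) (auto simp: partition_sums_def)

lemma partition_Sup_le_control:
  assumes "F 0 = 0" and block: "\<And>x y. x < y \<Longrightarrow> y \<le> n \<Longrightarrow> f x y \<le> c * (F y - F x)"
  shows "partition_Sup f n \<le> c * F n"
proof (rule partition_Sup_le)
  fix k i assume P: "is_partition n k i"
  have "(\<Sum>j<k. f (i j) (i (Suc j))) \<le> (\<Sum>j<k. c * (F (i (Suc j)) - F (i j)))"
  proof (rule sum_mono)
    fix j assume "j \<in> {..<k}"
    then show "f (i j) (i (Suc j)) \<le> c * (F (i (Suc j)) - F (i j))"
      using P ascending_upto_le[of k i "Suc j" k] by (intro block) (auto simp: is_partition_def)
  qed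
  also have "\<dots> = c * F n"
    using P assms(1)
    by (simp add: sum_distrib_left[symmetric] sum_lessThan_telescope[of "\<lambda>j. F (i j)"] is_partition_def)
  finally show "(\<Sum>j<k. f (i j) (i (Suc j))) \<le> c * F n" .
qed

lemma sup_norm_nonneg: "0 \<le> sup_norm n b"
  and abs_le_sup_norm: "1 \<le> i \<Longrightarrow> i \<le> n \<Longrightarrow> \<bar>b i\<bar> \<le> sup_norm n b"
proof -
  have "finite {\<bar>b i\<bar> | i. 1 \<le> i \<and> i \<le> n}"
    by (rule finite_image_set) simp
  then show "0 \<le> sup_norm n b" "1 \<le> i \<Longrightarrow> i \<le> n \<Longrightarrow> \<bar>b i\<bar> \<le> sup_norm n b"
    unfolding sup_norm_def by (auto intro: Max_ge)
qed

lemma abs_le_if_powr_le: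
  fixes z w p :: real
  assumes "0 < p" "\<bar>z\<bar> powr p \<le> w"
  shows "\<bar>z\<bar> \<le> w powr (1 / p)"
proof -
  have "\<bar>z\<bar> = (\<bar>z\<bar> powr p) powr (1 / p)"
    using assms(1) by (simp add: powr_powr)
  also have "\<dots> \<le> w powr (1 / p)"
    using assms by (intro powr_mono2) auto
  finally show ?thesis .
qed

lemma exists_small_product:
  fixes x y :: "nat \<Rightarrow> real"
  assumes "0 < N" and nonneg: "\<And>q. q < N \<Longrightarrow> 0 \<le> x q \<and> 0 \<le> y q"
    and sum_x: "(\<Sum>q<N. x q) \<le> X" and sum_y: "(\<Sum>q<N. y q) \<le> Y"
  shows "\<exists>q<N. x q * y q \<le> X * Y / (real N)\<^sup>2"
proof -
  define \<mu> where "\<mu> = Min ((\<lambda>q. x q * y q) ` {..<N})"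
  have "\<mu> \<in> (\<lambda>q. x q * y q) ` {..<N}"
    unfolding \<mu>_def using \<open>0 < N\<close> by (intro Min_in) auto
  then obtain q where q: "q < N" "\<mu> = x q * y q"
    by blast
  have "real N * sqrt \<mu> = (\<Sum>r<N. sqrt \<mu>)"
    by simp
  also have "\<dots> \<le> (\<Sum>r<N. sqrt (x r) * sqrt (y r))"
    by (rule sum_mono) (auto simp: \<mu>_def real_sqrt_mult[symmetric])
  finally have "real N * sqrt \<mu> \<le> (\<Sum>r<N. sqrt (x r) * sqrt (y r))" .
  then have "(real N * sqrt \<mu>)\<^sup>2 \<le> (\<Sum>r<N. sqrt (x r) * sqrt (y r))\<^sup>2"
    using nonneg q by (intro power_mono) auto
  also have "\<dots> \<le> (\<Sum>r<N. (sqrt (x r))\<^sup>2) * (\<Sum>r<N. (sqrt (y r))\<^sup>2)"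
    by (rule Cauchy_Schwarz_ineq_sum)
  also have "\<dots> = (\<Sum>r<N. x r) * (\<Sum>r<N. y r)"
    using nonneg by simp
  also have "\<dots> \<le> X * Y"
    using nonneg sum_x sum_y by (intro mult_mono) (auto intro: sum_nonneg order.trans[OF _ sum_x])
  finally have "(real N)\<^sup>2 * \<mu> \<le> X * Y"
    using nonneg q by (simp add: power_mult_distrib)
  then show ?thesis
    using q \<open>0 < N\<close> by (auto simp: field_simps)
qed

lemma sum_two_step_increments_le:
  fixes g :: "nat \<Rightarrow> real"
  assumes "\<And>j. j \<le> N \<Longrightarrow> g j \<le> g (Suc j)"
  shows "(\<Sum>q<N. g (Suc (Suc q)) - g q) \<le> 2 * (g (Suc N) - g 0)"
proof -
  have "(\<Sum>q<N. g (Suc (Suc q)) - g q) = (\<Sum>q<N. g (Suc (Suc q)) - g (Suc q)) + (\<Sum>q<N. g (Suc q) - g q)"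
    by (simp flip: sum.distrib)
  also have "\<dots> = (g (Suc N) - g 1) + (g N - g 0)"
    by (simp add: sum_lessThan_telescope[of "\<lambda>q. g (Suc q)"] sum_lessThan_telescope)
  also have "\<dots> \<le> 2 * (g (Suc N) - g 0)"
    using assms[of 0] assms[of N] by simp
  finally show ?thesis .
qed

definition block_sum :: "(nat \<Rightarrow> real) \<Rightarrow> nat \<Rightarrow> nat \<Rightarrow> real" where
  "block_sum a x y = (\<Sum>l\<in>{x<..y}. a l)"

lemma block_sum_split:
  assumes "x \<le> y" "y \<le> z"
  shows "block_sum a x z = block_sum a x y + block_sum a y z"
proof -
  have "{x<..z} = {x<..y} \<union> {y<..z}"
    using assms by auto
  then show ?thesis
    unfolding block_sum_def by (simp add: sum.union_disjoint)
qed

definition stieltjes_sum ::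
    "(nat \<Rightarrow> real) \<Rightarrow> (nat \<Rightarrow> real) \<Rightarrow> nat \<Rightarrow> (nat \<Rightarrow> nat) \<Rightarrow> nat \<Rightarrow> real" where
  "stieltjes_sum a b s u m = (\<Sum>r<m. block_sum a (u r) (u (Suc r)) * (b (u r + 1) - b (s + 1)))"

lemma stieltjes_sum_remove_point:
  assumes "Suc q < m" "u q \<le> u (Suc q)" "u (Suc q) \<le> u (Suc (Suc q))"
  shows "stieltjes_sum a b s u m =
    stieltjes_sum a b s (\<lambda>j. if j \<le> q then u j else u (Suc j)) (m - 1)
    + block_sum a (u (Suc q)) (u (Suc (Suc q))) * (b (u (Suc q) + 1) - b (u q + 1))"
proof -
  obtain d where m: "m = Suc (Suc q) + d"
    using less_imp_Suc_add[OF assms(1)] by auto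
  have block_split: "block_sum a (u q) (u (Suc (Suc q)))
      = block_sum a (u q) (u (Suc q)) + block_sum a (u (Suc q)) (u (Suc (Suc q)))"
    using assms(2,3) by (rule block_sum_split)
  show ?thesis
    unfolding m
  proof (induction d)
    case 0
    have "(\<Sum>r<q. block_sum a (u r) (u (Suc r)) * (b (u r + 1) - b (s + 1)))
      = stieltjes_sum a b s (\<lambda>j. if j \<le> q then u j else u (Suc j)) q"
      unfolding stieltjes_sum_def by (rule sum.cong) auto
    then show ?case
      unfolding stieltjes_sum_def
      by (simp add: block_split algebra_simps)
  next
    case (Suc d)
    then show ?case
      by (simp add: stieltjes_sum_def)
  qed
qed

lemma summable_powr_minus_two_div:
  fixes p :: real
  assumes "0 < p" "p < 2"
  shows "summable (\<lambda>k. real k powr - (2 / p))"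
  unfolding summable_real_powr_iff using assms by (simp add: field_simps)

locale p_variation_controls =
  fixes p :: real and a b Fa Fb :: "nat \<Rightarrow> real"
  assumes p_pos: "0 < p"
    and block_sum_le_Fa: "x < y \<Longrightarrow> \<bar>block_sum a x y\<bar> powr p \<le> Fa y - Fa x"
    and increment_le_Fb: "x < y \<Longrightarrow> \<bar>b y - b (x + 1)\<bar> powr p \<le> Fb y - Fb x"
begin

lemma Fa_mono: "x \<le> y \<Longrightarrow> Fa x \<le> Fa y"
  using order.trans[OF powr_ge_zero block_sum_le_Fa, of x y] by (cases "x = y") auto

lemma Fb_mono: "x \<le> y \<Longrightarrow> Fb x \<le> Fb y"
  using order.trans[OF powr_ge_zero increment_le_Fb, of x y] by (cases "x = y") auto

lemma deletion_cost_le: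
  assumes "x < y" "y < z"
  shows "\<bar>block_sum a y z * (b (y + 1) - b (x + 1))\<bar> \<le> ((Fa z - Fa y) * (Fb z - Fb x)) powr (1 / p)"
proof -
  have "\<bar>block_sum a y z\<bar> \<le> (Fa z - Fa y) powr (1 / p)"
    using assms(2) by (intro abs_le_if_powr_le p_pos block_sum_le_Fa)
  moreover have "\<bar>b (y + 1) - b (x + 1)\<bar> \<le> (Fb z - Fb x) powr (1 / p)"
    using assms increment_le_Fb[of x "y + 1"] Fb_mono[of "y + 1" z]
    by (intro abs_le_if_powr_le p_pos) simp
  ultimately have "\<bar>block_sum a y z * (b (y + 1) - b (x + 1))\<bar>
      \<le> (Fa z - Fa y) powr (1 / p) * (Fb z - Fb x) powr (1 / p)"
    unfolding abs_mult by (intro mult_mono) auto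
  also have "\<dots> = ((Fa z - Fa y) * (Fb z - Fb x)) powr (1 / p)"
    using assms Fa_mono[of y z] Fb_mono[of x z] by (simp add: powr_mult)
  finally show ?thesis .
qed

lemma exists_cheap_point:
  assumes "2 \<le> m" and u: "\<forall>j<m. u j < u (Suc j)" "u 0 = s" "u m = t"
  shows "\<exists>q. Suc q < m \<and>
    \<bar>block_sum a (u (Suc q)) (u (Suc (Suc q))) * (b (u (Suc q) + 1) - b (u q + 1))\<bar>
      \<le> (2 * (Fa t - Fa s) * (Fb t - Fb s)) powr (1 / p) * real (m - 1) powr - (2 / p)"
proof -
  define N where "N = m - 1"
  have m: "m = Suc N" "0 < N"
    using assms(1) by (auto simp: N_def)
  have u_step: "u j \<le> u (Suc j)" if "j \<le> N" for j
    using that u(1) m by (simp add: less_imp_le)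
  define x where "x q = Fa (u (Suc (Suc q))) - Fa (u (Suc q))" for q
  define y where "y q = Fb (u (Suc (Suc q))) - Fb (u q)" for q
  have nonneg: "0 \<le> x q \<and> 0 \<le> y q" if "q < N" for q
    using that u_step[of q] u_step[of "Suc q"] Fa_mono Fb_mono
    by (simp add: x_def y_def order.trans[of "u q"])
  have "(\<Sum>q<N. x q) = Fa t - Fa (u 1)"
    using sum_lessThan_telescope[of "\<lambda>q. Fa (u (Suc q))" N] u m by (simp add: x_def)
  also have "\<dots> \<le> Fa t - Fa s"
    using Fa_mono u_step[of 0] u by simp
  finally have sum_x: "(\<Sum>q<N. x q) \<le> Fa t - Fa s" .
  have sum_y: "(\<Sum>q<N. y q) \<le> 2 * (Fb t - Fb s)"
    using sum_two_step_increments_le[of N "\<lambda>j. Fb (u j)"] u_step Fb_mono u m by (simp add: y_def)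
  define K where "K = 2 * (Fa t - Fa s) * (Fb t - Fb s)"
  have "s \<le> t"
    using ascending_upto_le[OF u(1), of 0 m] u by simp
  then have "0 \<le> K"
    using Fa_mono Fb_mono by (simp add: K_def)
  have "(Fa t - Fa s) * (2 * (Fb t - Fb s)) = K"
    unfolding K_def by (simp only: mult_ac)
  then obtain q where q: "q < N" and xy: "x q * y q \<le> K / (real N)\<^sup>2"
    using exists_small_product[OF m(2) nonneg sum_x sum_y] by auto
  have "Suc q < m"
    using q m by simp
  then have "\<bar>block_sum a (u (Suc q)) (u (Suc (Suc q))) * (b (u (Suc q) + 1) - b (u q + 1))\<bar>
      \<le> (x q * y q) powr (1 / p)"
    unfolding x_def y_def using u(1)[rule_format, of q] u(1)[rule_format, of "Suc q"]
    by (intro deletion_cost_le) auto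
  also have "\<dots> \<le> (K / (real N)\<^sup>2) powr (1 / p)"
    using xy nonneg[OF q] p_pos by (intro powr_mono2) auto
  also have "\<dots> = K powr (1 / p) / (real N powr 2) powr (1 / p)"
    using \<open>0 \<le> K\<close> by (simp add: powr_divide)
  also have "\<dots> = K powr (1 / p) * real N powr - (2 / p)"
    unfolding powr_powr by (simp add: powr_minus_divide)
  finally show ?thesis
    using \<open>Suc q < m\<close> unfolding K_def N_def by blast
qed

lemma stieltjes_sum_le:
  assumes "0 < m" "\<forall>j<m. u j < u (Suc j)" "u 0 = s" "u m = t"
  shows "\<bar>stieltjes_sum a b s u m\<bar>
    \<le> (2 * (Fa t - Fa s) * (Fb t - Fb s)) powr (1 / p) * (\<Sum>k\<in>{1..<m}. real k powr - (2 / p))"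
  using assms
proof (induction m arbitrary: u)
  case 0
  then show ?case by simp
next
  case (Suc m)
  let ?K = "(2 * (Fa t - Fa s) * (Fb t - Fb s)) powr (1 / p)"
  show ?case
  proof (cases "m = 0")
    case True
    then show ?thesis
      using Suc.prems by (simp add: stieltjes_sum_def)
  next
    case False
    obtain q where q: "Suc q < Suc m" and cheap:
      "\<bar>block_sum a (u (Suc q)) (u (Suc (Suc q))) * (b (u (Suc q) + 1) - b (u q + 1))\<bar>
        \<le> ?K * real m powr - (2 / p)"
      using exists_cheap_point[of "Suc m" u s t] Suc.prems False by auto
    define u' where "u' = (\<lambda>j. if j \<le> q then u j else u (Suc j))"
    have u'_ascending: "\<forall>j<m. u' j < u' (Suc j)"
    proof (intro allI impI)
      fix j assume "j < m"
      then show "u' j < u' (Suc j)"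
        using Suc.prems(2) unfolding u'_def
        by (cases "j < q"; cases "j = q") (auto dest: spec[of _ j] spec[of _ "Suc j"] intro: less_trans)
    qed
    have "\<bar>stieltjes_sum a b s u' m\<bar> \<le> ?K * (\<Sum>k\<in>{1..<m}. real k powr - (2 / p))"
      using Suc.IH[OF _ u'_ascending] False q Suc.prems(3,4) by (simp add: u'_def)
    moreover have "stieltjes_sum a b s u (Suc m) = stieltjes_sum a b s u' m
        + block_sum a (u (Suc q)) (u (Suc (Suc q))) * (b (u (Suc q) + 1) - b (u q + 1))"
      using stieltjes_sum_remove_point[OF q] Suc.prems(2) q by (simp add: u'_def less_imp_le)
    ultimately have "\<bar>stieltjes_sum a b s u (Suc m)\<bar>
        \<le> ?K * (\<Sum>k\<in>{1..<m}. real k powr - (2 / p)) + ?K * real m powr - (2 / p)"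
      using cheap by linarith
    also have "\<dots> = ?K * (\<Sum>k\<in>{1..<Suc m}. real k powr - (2 / p))"
      using False by (simp add: distrib_left)
    finally show ?thesis .
  qed
qed

lemma stieltjes_block_le:
  assumes "p < 2" "s < t"
  shows "\<bar>\<Sum>l\<in>{s<..t}. a l * (b l - b (s + 1))\<bar>
    \<le> (2 * (Fa t - Fa s) * (Fb t - Fb s)) powr (1 / p) * (\<Sum>k. real k powr - (2 / p))"
proof -
  have "(\<Sum>l\<in>{s<..t}. a l * (b l - b (s + 1))) = stieltjes_sum a b s (\<lambda>r. s + r) (t - s)"
  proof -
    have "x \<in> (\<lambda>r. s + r + 1) ` {..<t - s}" if "s < x" "x \<le> t" for x
      using that by (intro image_eqI[of x _ "x - s - 1"]) auto
    then have "{s<..t} = (\<lambda>r. s + r + 1) ` {..<t - s}"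
      by auto
    moreover have "{n<..Suc n} = {Suc n}" for n
      by auto
    ultimately show ?thesis
      by (simp add: stieltjes_sum_def block_sum_def sum.reindex inj_on_def)
  qed
  also have "\<bar>\<dots>\<bar> \<le> (2 * (Fa t - Fa s) * (Fb t - Fb s)) powr (1 / p) * (\<Sum>k\<in>{1..<t - s}. real k powr - (2 / p))"
    using assms(2) by (intro stieltjes_sum_le) auto
  also have "\<dots> \<le> (2 * (Fa t - Fa s) * (Fb t - Fb s)) powr (1 / p) * (\<Sum>k. real k powr - (2 / p))"
    using p_pos assms(1) by (intro mult_left_mono sum_le_suminf summable_powr_minus_two_div) auto
  finally show ?thesis .
qed

lemma block_product_le:
  assumes "p < 2" "s < t" "\<bar>b (s + 1)\<bar> \<le> \<beta>"
  shows "\<bar>block_sum (\<lambda>l. a l * b l) s t\<bar>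
    \<le> (\<beta> + (\<Sum>k. real k powr - (2 / p)) * (2 * (Fb t - Fb s)) powr (1 / p)) * (Fa t - Fa s) powr (1 / p)"
proof -
  have "0 \<le> Fa t - Fa s" "0 \<le> Fb t - Fb s"
    using assms(2) Fa_mono Fb_mono by simp_all
  have "block_sum (\<lambda>l. a l * b l) s t = b (s + 1) * block_sum a s t + (\<Sum>l\<in>{s<..t}. a l * (b l - b (s + 1)))"
    by (simp add: block_sum_def sum_distrib_left algebra_simps flip: sum.distrib)
  moreover have "\<bar>b (s + 1) * block_sum a s t\<bar> \<le> \<beta> * (Fa t - Fa s) powr (1 / p)"
    unfolding abs_mult using assms(3) abs_le_if_powr_le[OF p_pos block_sum_le_Fa[OF assms(2)]]
    by (intro mult_mono) auto
  moreover have "2 * (Fa t - Fa s) * (Fb t - Fb s) = (Fa t - Fa s) * (2 * (Fb t - Fb s))"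
    by (simp only: mult_ac)
  then have "(2 * (Fa t - Fa s) * (Fb t - Fb s)) powr (1 / p)
      = (Fa t - Fa s) powr (1 / p) * (2 * (Fb t - Fb s)) powr (1 / p)"
    using \<open>0 \<le> Fa t - Fa s\<close> \<open>0 \<le> Fb t - Fb s\<close> by (subst powr_mult[symmetric]) auto
  ultimately show ?thesis
    using stieltjes_block_le[OF assms(1,2)] by (simp add: algebra_simps)
qed

lemma block_product_powr_le:
  assumes "p < 2" "s < t" "\<bar>b (s + 1)\<bar> \<le> \<beta>" "Fb t - Fb s \<le> W"
  shows "\<bar>block_sum (\<lambda>l. a l * b l) s t\<bar> powr p
    \<le> (\<beta> + (\<Sum>k. real k powr - (2 / p)) * (2 * W) powr (1 / p)) powr p * (Fa t - Fa s)"
proof -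
  define Z where "Z = (\<Sum>k. real k powr - (2 / p))"
  define K where "K = \<beta> + Z * (2 * W) powr (1 / p)"
  have "0 \<le> Z"
    unfolding Z_def using p_pos assms(1) by (intro suminf_nonneg summable_powr_minus_two_div) auto
  have "\<bar>block_sum (\<lambda>l. a l * b l) s t\<bar>
      \<le> (\<beta> + Z * (2 * (Fb t - Fb s)) powr (1 / p)) * (Fa t - Fa s) powr (1 / p)"
    unfolding Z_def using assms(1-3) by (rule block_product_le)
  also have "\<dots> \<le> K * (Fa t - Fa s) powr (1 / p)"
  proof (rule mult_right_mono)
    have "(2 * (Fb t - Fb s)) powr (1 / p) \<le> (2 * W) powr (1 / p)"
      using assms(2,4) Fb_mono[of s t] p_pos by (intro powr_mono2) auto
    then show "\<beta> + Z * (2 * (Fb t - Fb s)) powr (1 / p) \<le> K"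
      unfolding K_def using \<open>0 \<le> Z\<close> by (simp add: mult_left_mono)
  qed simp
  finally have "\<bar>block_sum (\<lambda>l. a l * b l) s t\<bar> \<le> K * (Fa t - Fa s) powr (1 / p)" .
  then have "\<bar>block_sum (\<lambda>l. a l * b l) s t\<bar> powr p \<le> (K * (Fa t - Fa s) powr (1 / p)) powr p"
    using p_pos by (intro powr_mono2) auto
  also have "\<dots> = K powr p * (Fa t - Fa s)"
    using \<open>0 \<le> Z\<close> assms(2,3) Fa_mono[of s t] p_pos by (simp add: K_def powr_mult powr_powr)
  finally show ?thesis
    unfolding K_def Z_def .
qed

end

lemma s_var_mult_le:
  assumes "0 < p" "p < 2"
  shows "s_var p n (\<lambda>i. a i * b i)
    \<le> (sup_norm n b + 2 powr (1 / p) * (\<Sum>k. real k powr - (2 / p)) * v_var p n b) * s_var p n a"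
proof -
  define Z where "Z = (\<Sum>k. real k powr - (2 / p))"
  define Fa where "Fa = partition_Sup (\<lambda>x y. \<bar>block_sum a x y\<bar> powr p)"
  define Fb where "Fb = partition_Sup (\<lambda>x y. \<bar>b y - b (x + 1)\<bar> powr p)"
  interpret p_variation_controls p a b Fa Fb
  proof
    fix x y :: nat
    assume "x < y"
    then show "\<bar>block_sum a x y\<bar> powr p \<le> Fa y - Fa x" "\<bar>b y - b (x + 1)\<bar> powr p \<le> Fb y - Fb x"
      unfolding Fa_def Fb_def by (rule block_le_partition_Sup_diff)+
  qed (rule assms(1))
  have Fa_0: "Fa 0 = 0" and Fb_0: "Fb 0 = 0"
    by (simp_all add: Fa_def Fb_def partition_Sup_zero)
  define K where "K = sup_norm n b + Z * (2 * Fb n) powr (1 / p)"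
  have "0 \<le> K"
    unfolding K_def Z_def using assms sup_norm_nonneg
    by (intro add_nonneg_nonneg mult_nonneg_nonneg suminf_nonneg summable_powr_minus_two_div) auto
  have "partition_Sup (\<lambda>x y. \<bar>block_sum (\<lambda>l. a l * b l) x y\<bar> powr p) n \<le> K powr p * Fa n"
  proof (rule partition_Sup_le_control[where F = Fa, OF Fa_0])
    fix x y assume "x < y" "y \<le> n"
    then show "\<bar>block_sum (\<lambda>l. a l * b l) x y\<bar> powr p \<le> K powr p * (Fa y - Fa x)"
      unfolding K_def Z_def using Fb_mono[of 0 x] Fb_mono[of y n] Fb_0
      by (intro block_product_powr_le assms(2) abs_le_sup_norm) auto
  qed
  then have "s_var p n (\<lambda>i. a i * b i) \<le> (K powr p * Fa n) powr (1 / p)"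
    unfolding s_var_eq_partition_Sup block_sum_def using assms(1)
    by (intro powr_mono2 partition_Sup_nonneg) auto
  also have "\<dots> = K * s_var p n a"
    using \<open>0 \<le> K\<close> Fa_mono[of 0 n] Fa_0 assms(1)
    by (simp add: s_var_eq_partition_Sup Fa_def block_sum_def powr_mult powr_powr)
  also have "K = sup_norm n b + 2 powr (1 / p) * Z * v_var p n b"
    using Fb_mono[of 0 n] Fb_0
    by (simp add: K_def v_var_eq_partition_Sup Fb_def powr_mult)
  finally show ?thesis
    unfolding Z_def .
qed

theorem corollary2p4:
  fixes p :: real
  assumes "1 \<le> p" and "p < 2"
  shows "\<exists>C>0. \<forall>(n::nat) (a::nat \<Rightarrow> real) (b::nat \<Rightarrow> real).
           s_var p n (\<lambda>i. a i * b i) \<le> C * s_var p n a * (sup_norm n b + v_var p n b)"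
proof -
  have "0 < p"
    using assms(1) by simp
  define c where "c = 2 powr (1 / p) * (\<Sum>k. real k powr - (2 / p))"
  have "0 \<le> c"
    unfolding c_def using \<open>0 < p\<close> assms(2)
    by (intro mult_nonneg_nonneg suminf_nonneg summable_powr_minus_two_div) auto
  show ?thesis
  proof (intro exI[of _ "1 + c"] conjI allI)
    fix n a b
    have "0 \<le> c * sup_norm n b" "0 \<le> v_var p n b" "0 \<le> s_var p n a"
      using \<open>0 \<le> c\<close> by (simp_all add: sup_norm_nonneg s_var_def v_var_def)
    have "s_var p n (\<lambda>i. a i * b i) \<le> (sup_norm n b + c * v_var p n b) * s_var p n a"
      using s_var_mult_le[OF \<open>0 < p\<close> assms(2)] unfolding c_def .
    also have "\<dots> \<le> (1 + c) * (sup_norm n b + v_var p n b) * s_var p n a"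
      using \<open>0 \<le> c * sup_norm n b\<close> \<open>0 \<le> v_var p n b\<close> \<open>0 \<le> s_var p n a\<close>
      by (intro mult_right_mono) (simp_all add: algebra_simps)
    finally show "s_var p n (\<lambda>i. a i * b i) \<le> (1 + c) * s_var p n a * (sup_norm n b + v_var p n b)"
      by (simp only: mult_ac)
  qed (use \<open>0 \<le> c\<close> in simp)
qed

end
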